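(* Let $H$ be a reduced atomic cancellative monoid, and let $\sim_H \subset \mathsf Z(H)\times\mathsf Z(H)$ be its monoid of relations. 1. $\sim_H$ is a saturated submonoid of $\mathsf Z(H)\times \mathsf Z(H)$, and $\sim_H$ is a reduced cancellative BF-monoid. 2. If $\sim_H$ satisfies the ascending chain condition on right ideals, then $\sim_H$ is finitely generated. 3. If $H$ is commutative and finitely generated, then $\sim_H$ satisfies the ascending chain condition on ideals and $\sim_H$ is finitely generated.
   Context: A monoid is an associative semigroup with identity; $H^\times$ is its group of units and $H$ is reduced if $H^\times=\{1\}$. An atom of $H$ is a non-unit $u$ such that $u=ab$ implies $a\in H^\times$ or $b\in H^\times$; $\mathcal A(H)$ is the set of atoms, and $H$ is atomic if every non-unit is a finite product of atoms. For a reduced atomic monoid $H$, the factorization monoid $\mathsf Z(H)$ is the free monoid $\mathcal F^*(\mathcal A(H))$ (words over $\mathcal A(H)$) if $H$ is non-commutative and the free abelian monoid $\mathcal F(\mathcal A(H))$ if $H$ is commutative; $\pi:\mathsf Z(H)\to H$ is the canonical epimorphism, and the length $|z|$ of $z\in\mathsf Z(H)$ is the number of atoms in $z$. The monoid of relations is $\sim_H=\{(x,y)\in\mathsf Z(H)\times\mathsf Z(H)\mid \pi(x)=\pi(y)\}$. A submonoid $S$ of a monoid $D$ is saturated if $a\in D$, $b\in S$ and ($ab\in S$ or $ba\in S$) imply $a\in S$. For an atomic monoid, $\mathsf L(a)$ denotes the set of all $k$ such that $a$ is a product of $k$ atoms (with $\mathsf L(\varepsilon)=\{0\}$ for units); a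 BF-monoid is an atomic monoid in which $\mathsf L(a)$ is finite and nonempty for all $a$. *)

theory Defs
  imports "HOL-Algebra.Group" "HOL-Library.Multiset"
begin

definition lprod :: "('a, 'b) monoid_scheme \<Rightarrow> 'a list \<Rightarrow> 'a" where
  "lprod M xs = foldr (\<lambda>x y. x \<otimes>\<^bsub>M\<^esub> y) xs \<one>\<^bsub>M\<^esub>"

definition commutative :: "('a, 'b) monoid_scheme \<Rightarrow> bool" where
  "commutative M \<longleftrightarrow> (\<forall>a\<in>carrier M. \<forall>b\<in>carrier M. a \<otimes>\<^bsub>M\<^esub> b = b \<otimes>\<^bsub>M\<^esub> a)"

definition reduced :: "('a, 'b) monoid_scheme \<Rightarrow> bool" where
  "reduced M \<longleftrightarrow> Units M = {\<one>\<^bsub>M\<^esub>}"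

definition cancellative :: "('a, 'b) monoid_scheme \<Rightarrow> bool" where
  "cancellative M \<longleftrightarrow>
     (\<forall>a\<in>carrier M. \<forall>b\<in>carrier M. \<forall>c\<in>carrier M.
        (a \<otimes>\<^bsub>M\<^esub> b = a \<otimes>\<^bsub>M\<^esub> c \<longrightarrow> b = c) \<and>
        (b \<otimes>\<^bsub>M\<^esub> a = c \<otimes>\<^bsub>M\<^esub> a \<longrightarrow> b = c))"

definition atom :: "('a, 'b) monoid_scheme \<Rightarrow> 'a \<Rightarrow> bool" where
  "atom M u \<longleftrightarrow> u \<in> carrier M \<and> u \<notin> Units M \<and>
     (\<forall>a\<in>carrier M. \<forall>b\<in>carrier M. u = a \<otimes>\<^bsub>M\<^esub> b \<longrightarrow> a \<in> Units M \<or> b \<in> Units M)"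

definition atoms :: "('a, 'b) monoid_scheme \<Rightarrow> 'a set" where
  "atoms M = {u. atom M u}"

definition atomic :: "('a, 'b) monoid_scheme \<Rightarrow> bool" where
  "atomic M \<longleftrightarrow> (\<forall>a\<in>carrier M - Units M.
     \<exists>xs. xs \<noteq> [] \<and> set xs \<subseteq> atoms M \<and> lprod M xs = a)"

definition lengths :: "('a, 'b) monoid_scheme \<Rightarrow> 'a \<Rightarrow> nat set" where
  "lengths M a = (if a \<in> Units M then {0}
     else {length xs | xs. set xs \<subseteq> atoms M \<and> lprod M xs = a})"

definition BF_monoid :: "('a, 'b) monoid_scheme \<Rightarrow> bool" where
  "BF_monoid M \<longleftrightarrow> monoid M \<and> atomic M \<and>
     (\<forall>a\<in>carrier M. finite (lengths M a) \<and> lengths M a \<noteq> {})"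

definition saturated :: "'a set \<Rightarrow> ('a, 'b) monoid_scheme \<Rightarrow> bool" where
  "saturated S D \<longleftrightarrow> submonoid S D \<and>
     (\<forall>a\<in>carrier D. \<forall>b\<in>S. (a \<otimes>\<^bsub>D\<^esub> b \<in> S \<or> b \<otimes>\<^bsub>D\<^esub> a \<in> S) \<longrightarrow> a \<in> S)"

definition right_ideal :: "('a, 'b) monoid_scheme \<Rightarrow> 'a set \<Rightarrow> bool" where
  "right_ideal M I \<longleftrightarrow> I \<subseteq> carrier M \<and> (\<forall>a\<in>I. \<forall>s\<in>carrier M. a \<otimes>\<^bsub>M\<^esub> s \<in> I)"

definition two_sided_ideal :: "('a, 'b) monoid_scheme \<Rightarrow> 'a set \<Rightarrow> bool" where
  "two_sided_ideal M I \<longleftrightarrow> I \<subseteq> carrier M \<and>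
     (\<forall>a\<in>I. \<forall>s\<in>carrier M. a \<otimes>\<^bsub>M\<^esub> s \<in> I \<and> s \<otimes>\<^bsub>M\<^esub> a \<in> I)"

definition acc_on :: "('a set \<Rightarrow> bool) \<Rightarrow> bool" where
  "acc_on P \<longleftrightarrow> (\<forall>f :: nat \<Rightarrow> 'a set. (\<forall>n. P (f n)) \<and> (\<forall>n. f n \<subseteq> f (Suc n))
      \<longrightarrow> (\<exists>N. \<forall>n\<ge>N. f n = f N))"

definition acc_right_ideals :: "('a, 'b) monoid_scheme \<Rightarrow> bool" where
  "acc_right_ideals M \<longleftrightarrow> acc_on (right_ideal M)"

definition acc_ideals :: "('a, 'b) monoid_scheme \<Rightarrow> bool" where
  "acc_ideals M \<longleftrightarrow> acc_on (two_sided_ideal M)"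

definition finitely_generated :: "('a, 'b) monoid_scheme \<Rightarrow> bool" where
  "finitely_generated M \<longleftrightarrow> (\<exists>E. finite E \<and> E \<subseteq> carrier M \<and>
     carrier M = {lprod M xs | xs. set xs \<subseteq> E})"

text \<open>Free monoid on the atoms (non-commutative case).\<close>
definition ZF :: "('a, 'b) monoid_scheme \<Rightarrow> 'a list monoid" where
  "ZF H = \<lparr>carrier = {xs. set xs \<subseteq> atoms H}, monoid.mult = (@), one = []\<rparr>"

definition piF :: "('a, 'b) monoid_scheme \<Rightarrow> 'a list \<Rightarrow> 'a" where
  "piF H xs = lprod H xs"

text \<open>Free abelian monoid on the atoms (commutative case).\<close>
definition ZA :: "('a, 'b) monoid_scheme \<Rightarrow> 'a multiset monoid" where
  "ZA H = \<lparr>carrier = {m. set_mset m \<subseteq> atoms H}, monoid.mult = (+), one = {#}\<rparr>"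

definition piA :: "('a, 'b) monoid_scheme \<Rightarrow> 'a multiset \<Rightarrow> 'a" where
  "piA H m = lprod H (SOME xs. mset xs = m)"

definition rel_monoid :: "('z, 'c) monoid_scheme \<Rightarrow> ('z \<Rightarrow> 'a) \<Rightarrow> ('z \<times> 'z) monoid" where
  "rel_monoid Z p = (Z \<times>\<times> Z)\<lparr>carrier := {z \<in> carrier Z \<times> carrier Z. p (fst z) = p (snd z)}\<rparr>"

definition RelF :: "('a, 'b) monoid_scheme \<Rightarrow> ('a list \<times> 'a list) monoid" where
  "RelF H = rel_monoid (ZF H) (piF H)"

definition RelA :: "('a, 'b) monoid_scheme \<Rightarrow> ('a multiset \<times> 'a multiset) monoid" where
  "RelA H = rel_monoid (ZA H) (piA H)"

end

theory Submission
  imports Defs "HOL-Library.Ramsey"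
begin

text \<open>
  Every factorization monoid carries an additive length function vanishing only at the identity
  (word length, resp. multiset size), and the same holds for the submonoid \<open>\<sim>\<^sub>H\<close> of pairs of
  factorizations with equal product. Such a length forces reducedness and atomicity and bounds
  the length of any factorization, so \<open>\<sim>\<^sub>H\<close> is a reduced BF-monoid; saturation is cancellativity
  of \<open>H\<close>. In a reduced atomic monoid the atoms \<open>u\<^sub>0, u\<^sub>1, \<dots>\<close> would generate a strictly ascending
  chain of right ideals \<open>u\<^sub>0M \<subseteq> u\<^sub>0M \<union> u\<^sub>1M \<subseteq> \<dots>\<close> unless there are finitely many of them, which
  gives finite generation under ACC. If \<open>H\<close> is commutative and finitely generated it has
  finitely many atoms, so by Dickson's lemma every sequence in \<open>\<sim>\<^sub>H\<close> has two terms
  \<open>x\<^sub>i \<le> x\<^sub>j\<close> (componentwise, \<open>i < j\<close>); by saturation \<open>x\<^sub>j - x\<^sub>i \<in> \<sim>\<^sub>H\<close>, so \<open>x\<^sub>i\<close> divides \<open>x\<^sub>j\<close>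
  in \<open>\<sim>\<^sub>H\<close>, and this rules out strictly ascending chains of ideals.
\<close>

lemma lprod_Nil [simp]: "lprod M [] = \<one>\<^bsub>M\<^esub>"
  by (simp add: lprod_def)

lemma lprod_Cons [simp]: "lprod M (x # xs) = x \<otimes>\<^bsub>M\<^esub> lprod M xs"
  by (simp add: lprod_def)

lemma lprod_closed: "monoid M \<Longrightarrow> set xs \<subseteq> carrier M \<Longrightarrow> lprod M xs \<in> carrier M"
  by (induction xs) (auto simp: monoid.m_closed monoid.one_closed)

lemma lprod_append:
  "monoid M \<Longrightarrow> set xs \<subseteq> carrier M \<Longrightarrow> set ys \<subseteq> carrier M \<Longrightarrow>
   lprod M (xs @ ys) = lprod M xs \<otimes>\<^bsub>M\<^esub> lprod M ys"
  by (induction xs) (auto simp: monoid.m_assoc monoid.l_one lprod_closed)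

lemma lprod_perm:
  assumes "monoid M" "commutative M"
  shows "set xs \<subseteq> carrier M \<Longrightarrow> mset xs = mset ys \<Longrightarrow> lprod M xs = lprod M ys"
proof (induction xs arbitrary: ys)
  case Nil
  then show ?case by simp
next
  case (Cons x xs)
  interpret M: monoid M by fact
  have "x \<in> set ys" using Cons.prems by (metis list.set_intros(1) set_mset_mset)
  then obtain ys1 ys2 where ys: "ys = ys1 @ x # ys2" by (meson split_list)
  have ys_carrier: "set ys \<subseteq> carrier M" using Cons.prems by (metis set_mset_mset)
  then have closed: "lprod M ys1 \<in> carrier M" "lprod M ys2 \<in> carrier M" "x \<in> carrier M"
    using ys by (auto intro!: lprod_closed[OF assms(1)])
  have "lprod M xs = lprod M (ys1 @ ys2)" using Cons ys by simp
  then have "lprod M (x # xs) = x \<otimes>\<^bsub>M\<^esub> (lprod M ys1 \<otimes>\<^bsub>M\<^esub> lprod M ys2)"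
    using ys_carrier ys by (simp add: lprod_append[OF assms(1)])
  also have "\<dots> = lprod M ys1 \<otimes>\<^bsub>M\<^esub> (x \<otimes>\<^bsub>M\<^esub> lprod M ys2)"
    using assms(2) closed unfolding commutative_def by (metis M.m_assoc)
  also have "\<dots> = lprod M ys"
    using ys_carrier ys by (simp add: lprod_append[OF assms(1)])
  finally show ?case .
qed

lemma atoms_subset_carrier: "atoms M \<subseteq> carrier M"
  by (auto simp: atoms_def atom_def)

section \<open>Monoids with a length function\<close>

locale length_monoid = monoid M for M (structure) +
  fixes len :: "'a \<Rightarrow> nat"
  assumes len_mult: "\<lbrakk>x \<in> carrier M; y \<in> carrier M\<rbrakk> \<Longrightarrow> len (x \<otimes> y) = len x + len y"
    and len_eq_0D: "\<lbrakk>x \<in> carrier M; len x = 0\<rbrakk> \<Longrightarrow> x = \<one>"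
begin

lemma len_one [simp]: "len \<one> = 0"
  using len_mult[of \<one> \<one>] by simp

lemma Units_eq_one: "Units M = {\<one>}"
proof
  show "Units M \<subseteq> {\<one>}"
  proof
    fix y assume "y \<in> Units M"
    then obtain x where "x \<in> carrier M" "y \<in> carrier M" "x \<otimes> y = \<one>"
      unfolding Units_def by blast
    then show "y \<in> {\<one>}" using len_mult[of x y] len_eq_0D[of y] by simp
  qed
qed simp

lemma reduced: "reduced M"
  by (simp add: reduced_def Units_eq_one)

lemma len_pos: "\<lbrakk>x \<in> carrier M; x \<notin> Units M\<rbrakk> \<Longrightarrow> 0 < len x"
  using len_eq_0D Units_eq_one by fastforce

lemma len_lprod: "set xs \<subseteq> carrier M \<Longrightarrow> len (lprod M xs) = sum_list (map len xs)"
  by (induction xs) (auto simp: len_mult lprod_closed[OF monoid_axioms])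

lemma atomic: "atomic M"
  unfolding atomic_def
proof
  fix a assume "a \<in> carrier M - Units M"
  then show "\<exists>xs. xs \<noteq> [] \<and> set xs \<subseteq> atoms M \<and> lprod M xs = a"
  proof (induction "len a" arbitrary: a rule: less_induct)
    case less
    show ?case
    proof (cases "atom M a")
      case True
      then show ?thesis by (intro exI[of _ "[a]"]) (auto simp: atoms_def atom_def)
    next
      case False
      then obtain b c where bc: "b \<in> carrier M - Units M" "c \<in> carrier M - Units M" "a = b \<otimes> c"
        using less.prems unfolding atom_def by blast
      then have "len b < len a" "len c < len a"
        using len_mult[of b c] len_pos[of b] len_pos[of c] by auto
      then obtain xs ys where "xs \<noteq> []" "set xs \<subseteq> atoms M" "lprod M xs = b"
        "set ys \<subseteq> atoms M" "lprod M ys = c"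
        using less.hyps bc by blast
      then show ?thesis
        using bc atoms_subset_carrier[of M]
        by (intro exI[of _ "xs @ ys"]) (auto simp: lprod_append[OF monoid_axioms])
    qed
  qed
qed

lemma lengths_bounded: "a \<in> carrier M \<Longrightarrow> lengths M a \<subseteq> {..len a}"
proof
  fix k assume a: "a \<in> carrier M" and "k \<in> lengths M a"
  show "k \<in> {..len a}"
  proof (cases "a \<in> Units M")
    case False
    then obtain xs where xs: "k = length xs" "set xs \<subseteq> atoms M" "lprod M xs = a"
      using \<open>k \<in> lengths M a\<close> by (auto simp: lengths_def)
    have "\<forall>x\<in>set xs. 1 \<le> len x"
      using xs(2) len_pos by (auto simp: atoms_def atom_def Suc_le_eq)
    then have "length xs \<le> sum_list (map len xs)"
      by (induction xs) auto
    also have "\<dots> = len a" using len_lprod xs atoms_subset_carrier by fastforce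
    finally show ?thesis using xs by simp
  qed (use \<open>k \<in> lengths M a\<close> in \<open>simp add: lengths_def\<close>)
qed

lemma BF_monoid: "BF_monoid M"
  unfolding BF_monoid_def
proof (intro conjI ballI)
  fix a assume a: "a \<in> carrier M"
  show "finite (lengths M a)" using finite_subset[OF lengths_bounded[OF a]] by simp
  show "lengths M a \<noteq> {}"
  proof (cases "a \<in> Units M")
    case False
    then obtain xs where "set xs \<subseteq> atoms M" "lprod M xs = a"
      using atomic a unfolding atomic_def by blast
    then show ?thesis using False by (auto simp: lengths_def)
  qed (simp add: lengths_def)
qed (simp_all add: monoid_axioms atomic)

end

lemma carrier_rel_monoid:
  "carrier (rel_monoid Z p) = {z \<in> carrier Z \<times> carrier Z. p (fst z) = p (snd z)}"
  by (simp add: rel_monoid_def)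

lemma mult_rel_monoid [simp]: "x \<otimes>\<^bsub>rel_monoid Z p\<^esub> y = x \<otimes>\<^bsub>Z \<times>\<times> Z\<^esub> y"
  by (simp add: rel_monoid_def)

lemma one_rel_monoid [simp]: "\<one>\<^bsub>rel_monoid Z p\<^esub> = (\<one>\<^bsub>Z\<^esub>, \<one>\<^bsub>Z\<^esub>)"
  by (simp add: rel_monoid_def)

lemma length_monoid_rel_monoid:
  assumes "length_monoid Z l" and hom: "p \<in> hom Z H"
  shows "length_monoid (rel_monoid Z p) (\<lambda>z. l (fst z) + l (snd z))"
proof -
  interpret Z: length_monoid Z l by fact
  show ?thesis
    by unfold_locales
      (auto simp: carrier_rel_monoid mult_DirProd' hom_mult[OF hom] Z.m_assoc Z.len_mult
        prod_eq_iff intro: Z.len_eq_0D)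
qed

lemma cancellative_rel_monoid: "cancellative Z \<Longrightarrow> cancellative (rel_monoid Z p)"
  by (auto simp: cancellative_def carrier_rel_monoid mult_DirProd' prod_eq_iff)

lemma saturated_rel_monoid:
  assumes "monoid Z" "cancellative H" and hom: "p \<in> hom Z H"
  shows "saturated (carrier (rel_monoid Z p)) (Z \<times>\<times> Z)"
  unfolding saturated_def
proof (intro conjI ballI impI)
  interpret Z: monoid Z by fact
  show "submonoid (carrier (rel_monoid Z p)) (Z \<times>\<times> Z)"
    by unfold_locales (auto simp: carrier_rel_monoid mult_DirProd' hom_mult[OF hom])
  fix a b
  assume a: "a \<in> carrier (Z \<times>\<times> Z)" and b: "b \<in> carrier (rel_monoid Z p)"
    and "a \<otimes>\<^bsub>Z \<times>\<times> Z\<^esub> b \<in> carrier (rel_monoid Z p) \<or> b \<otimes>\<^bsub>Z \<times>\<times> Z\<^esub> a \<in> carrier (rel_monoid Z p)"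
  then have "p (fst a) \<otimes>\<^bsub>H\<^esub> p (fst b) = p (snd a) \<otimes>\<^bsub>H\<^esub> p (fst b) \<or>
             p (fst b) \<otimes>\<^bsub>H\<^esub> p (fst a) = p (fst b) \<otimes>\<^bsub>H\<^esub> p (snd a)"
    by (auto simp: carrier_rel_monoid mult_DirProd' hom_mult[OF hom])
  moreover have "p (fst a) \<in> carrier H" "p (snd a) \<in> carrier H" "p (fst b) \<in> carrier H"
    using a b hom by (auto simp: carrier_rel_monoid hom_def)
  ultimately have "p (fst a) = p (snd a)"
    using \<open>cancellative H\<close> unfolding cancellative_def by blast
  then show "a \<in> carrier (rel_monoid Z p)" using a by (auto simp: carrier_rel_monoid)
qed

lemma rel_monoid_properties:
  assumes "length_monoid Z l" "cancellative Z" "cancellative H" "p \<in> hom Z H"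
  shows "saturated (carrier (rel_monoid Z p)) (Z \<times>\<times> Z) \<and> reduced (rel_monoid Z p) \<and>
         cancellative (rel_monoid Z p) \<and> BF_monoid (rel_monoid Z p)"
proof -
  interpret R: length_monoid "rel_monoid Z p" "\<lambda>z. l (fst z) + l (snd z)"
    using length_monoid_rel_monoid assms(1,4) .
  show ?thesis
    using saturated_rel_monoid[OF _ assms(3,4)] cancellative_rel_monoid[OF assms(2)]
      R.reduced R.BF_monoid assms(1) length_monoid.axioms(1) by blast
qed

lemma length_monoid_ZF: "length_monoid (ZF H) length"
  by unfold_locales (auto simp: ZF_def)

lemma cancellative_ZF: "cancellative (ZF H)"
  by (auto simp: ZF_def cancellative_def)

lemma piF_hom: "monoid H \<Longrightarrow> piF H \<in> hom (ZF H) H"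
  using atoms_subset_carrier[of H]
  by (intro homI) (auto simp: ZF_def piF_def lprod_append intro!: lprod_closed)

lemma length_monoid_ZA: "length_monoid (ZA H) size"
  by unfold_locales (auto simp: ZA_def)

lemma cancellative_ZA: "cancellative (ZA H)"
  by (auto simp: ZA_def cancellative_def)

lemma piA_eq_lprod:
  assumes "monoid H" "commutative H" "set xs \<subseteq> carrier H"
  shows "piA H (mset xs) = lprod H xs"
proof -
  have some: "mset (SOME ys. mset ys = mset xs) = mset xs" by (rule someI) (rule refl)
  then have "set (SOME ys. mset ys = mset xs) \<subseteq> carrier H" using assms(3) by (metis set_mset_mset)
  then show ?thesis unfolding piA_def using lprod_perm[OF assms(1,2)] some by metis
qed

lemma piA_hom:
  assumes "monoid H" "commutative H"
  shows "piA H \<in> hom (ZA H) H"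
proof (rule homI)
  fix a b assume "a \<in> carrier (ZA H)" "b \<in> carrier (ZA H)"
  moreover obtain xs ys where "a = mset xs" "b = mset ys" using ex_mset by metis
  ultimately have "set xs \<subseteq> carrier H" "set ys \<subseteq> carrier H"
    using atoms_subset_carrier[of H] by (auto simp: ZA_def)
  then show "piA H (a \<otimes>\<^bsub>ZA H\<^esub> b) = piA H a \<otimes>\<^bsub>H\<^esub> piA H b"
    using \<open>a = mset xs\<close> \<open>b = mset ys\<close>
    by (simp add: ZA_def piA_eq_lprod[OF assms] lprod_append[OF assms(1)] flip: mset_append)
next
  fix a assume "a \<in> carrier (ZA H)"
  moreover obtain xs where "a = mset xs" using ex_mset by metis
  ultimately have "set xs \<subseteq> carrier H" using atoms_subset_carrier[of H] by (auto simp: ZA_def)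
  then show "piA H a \<in> carrier H"
    using \<open>a = mset xs\<close> by (simp add: piA_eq_lprod[OF assms] lprod_closed[OF assms(1)])
qed

lemma RelF_properties:
  assumes "monoid H" "cancellative H"
  shows "saturated (carrier (RelF H)) (ZF H \<times>\<times> ZF H) \<and> reduced (RelF H) \<and>
         cancellative (RelF H) \<and> BF_monoid (RelF H)"
  unfolding RelF_def
  using rel_monoid_properties[OF length_monoid_ZF cancellative_ZF assms(2) piF_hom[OF assms(1)]] .

lemma RelA_properties:
  assumes "monoid H" "cancellative H" "commutative H"
  shows "saturated (carrier (RelA H)) (ZA H \<times>\<times> ZA H) \<and> reduced (RelA H) \<and>
         cancellative (RelA H) \<and> BF_monoid (RelA H)"
  unfolding RelA_def
  using rel_monoid_properties[OF length_monoid_ZA cancellative_ZA assms(2) piA_hom[OF assms(1,3)]] .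

section \<open>Chain conditions and finite generation\<close>

lemma acc_on_mono: "(\<And>I. P I \<Longrightarrow> Q I) \<Longrightarrow> acc_on Q \<Longrightarrow> acc_on P"
  unfolding acc_on_def by blast

lemma finite_atoms_if_acc_right_ideals:
  assumes "monoid M" "reduced M" "acc_right_ideals M"
  shows "finite (atoms M)"
proof (rule ccontr)
  interpret M: monoid M by fact
  assume "infinite (atoms M)"
  then obtain u :: "nat \<Rightarrow> _" where u: "inj u" "range u \<subseteq> atoms M"
    using infinite_countable_subset by blast
  then have u_atom: "atom M (u i)" and u_carrier: "u i \<in> carrier M" for i
    by (auto simp: atoms_def atom_def)
  define f where "f n = {u i \<otimes>\<^bsub>M\<^esub> s | i s. i < n \<and> s \<in> carrier M}" for n
  have ideal: "right_ideal M (f n)" for n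
    unfolding right_ideal_def f_def by (auto simp: u_carrier M.m_assoc) (metis M.m_closed)
  have chain: "f n \<subseteq> f (Suc n)" for n
    unfolding f_def by (auto intro: less_SucI)
  obtain N where "\<forall>n\<ge>N. f n = f N"
    using \<open>acc_right_ideals M\<close>[unfolded acc_right_ideals_def acc_on_def, rule_format, of f]
      ideal chain by blast
  then have "f (Suc N) = f N" using le_Suc_eq by blast
  moreover have "u N \<in> f (Suc N)"
    unfolding f_def using u_carrier[of N] by (auto intro!: exI[of _ N] exI[of _ "\<one>\<^bsub>M\<^esub>"])
  ultimately have "u N \<in> f N" by simp
  then obtain i s where factor: "i < N" "s \<in> carrier M" "u N = u i \<otimes>\<^bsub>M\<^esub> s"
    unfolding f_def by blast
  then have "u i \<in> Units M \<or> s \<in> Units M"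
    using u_atom[of N] u_carrier[of i] unfolding atom_def by blast
  moreover have "u i \<notin> Units M" using u_atom[of i] by (simp add: atom_def)
  ultimately have "u N = u i"
    using factor \<open>reduced M\<close> u_carrier[of i] by (simp add: reduced_def)
  then show False using \<open>i < N\<close> inj_eq[OF u(1)] by simp
qed

lemma finitely_generated_if_finite_atoms:
  assumes "monoid M" "reduced M" "atomic M" "finite (atoms M)"
  shows "finitely_generated M"
proof -
  have "carrier M \<subseteq> {lprod M xs | xs. set xs \<subseteq> atoms M}"
  proof
    fix a assume a: "a \<in> carrier M"
    show "a \<in> {lprod M xs | xs. set xs \<subseteq> atoms M}"
    proof (cases "a \<in> Units M")
      case True
      then have "a = lprod M []" using \<open>reduced M\<close> by (simp add: reduced_def)
      then show ?thesis by (intro CollectI exI[of _ "[]"]) simp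
    next
      case False
      then obtain xs where "set xs \<subseteq> atoms M" "lprod M xs = a"
        using \<open>atomic M\<close> a unfolding atomic_def by blast
      then show ?thesis by (intro CollectI exI[of _ xs]) simp
    qed
  qed
  moreover have "{lprod M xs | xs. set xs \<subseteq> atoms M} \<subseteq> carrier M"
    using atoms_subset_carrier[of M] by (auto intro: lprod_closed[OF assms(1)])
  ultimately have "carrier M = {lprod M xs | xs. set xs \<subseteq> atoms M}"
    by (rule equalityI)
  then show ?thesis
    unfolding finitely_generated_def using assms(4) atoms_subset_carrier[of M] by blast
qed

lemma finitely_generated_if_acc_right_ideals:
  assumes "monoid M" "reduced M" "atomic M" "acc_right_ideals M"
  shows "finitely_generated M"
  using assms finitely_generated_if_finite_atoms finite_atoms_if_acc_right_ideals by blast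

lemma finite_atoms_if_finitely_generated:
  assumes "monoid M" "reduced M" "finitely_generated M"
  shows "finite (atoms M)"
proof -
  obtain E where E: "finite E" "E \<subseteq> carrier M" "carrier M = {lprod M xs | xs. set xs \<subseteq> E}"
    using assms(3) unfolding finitely_generated_def by blast
  have atom_in_E: "u \<in> E" if "set xs \<subseteq> E" "atom M u" "u = lprod M xs" for xs u
    using that
  proof (induction xs arbitrary: u)
    case (Cons x xs)
    then have "x \<in> carrier M" "lprod M xs \<in> carrier M"
      using E(2) by (auto intro!: lprod_closed[OF assms(1)])
    then have "x = \<one>\<^bsub>M\<^esub> \<or> lprod M xs = \<one>\<^bsub>M\<^esub>"
      using Cons.prems assms(2) unfolding atom_def reduced_def by auto
    then show ?case using Cons \<open>x \<in> carrier M\<close> \<open>lprod M xs \<in> carrier M\<close>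
      by (auto simp: monoid.l_one[OF assms(1)] monoid.r_one[OF assms(1)])
  qed (simp add: atom_def monoid.Units_one_closed[OF assms(1)])
  have "atoms M \<subseteq> E"
  proof
    fix u assume "u \<in> atoms M"
    then have "atom M u" "u \<in> carrier M" by (auto simp: atoms_def atom_def)
    then obtain xs where "set xs \<subseteq> E" "u = lprod M xs" using E(3) by blast
    then show "u \<in> E" using atom_in_E \<open>atom M u\<close> by blast
  qed
  then show ?thesis using E(1) finite_subset by blast
qed

lemma acc_ideals_if_acc_right_ideals: "acc_right_ideals M \<Longrightarrow> acc_ideals M"
  unfolding acc_ideals_def acc_right_ideals_def
  by (rule acc_on_mono) (auto simp: two_sided_ideal_def right_ideal_def)

lemma acc_right_ideals_if_divisibility_almost_full:
  fixes M :: "('a, 'b) monoid_scheme"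
  assumes good: "\<And>g :: nat \<Rightarrow> 'a. (\<And>k. g k \<in> carrier M) \<Longrightarrow>
    \<exists>i j s. i < j \<and> s \<in> carrier M \<and> g j = g i \<otimes>\<^bsub>M\<^esub> s"
  shows "acc_right_ideals M"
  unfolding acc_right_ideals_def acc_on_def
proof (intro allI impI)
  fix f :: "nat \<Rightarrow> _ set"
  assume f: "(\<forall>n. right_ideal M (f n)) \<and> (\<forall>n. f n \<subseteq> f (Suc n))"
  then have ideal: "right_ideal M (f n)" and step: "f n \<subseteq> f (Suc n)" for n
    by simp_all
  have mono: "m \<le> n \<Longrightarrow> f m \<subseteq> f n" for m n
    using lift_Suc_mono_le[of f m n] step by blast
  show "\<exists>N. \<forall>n\<ge>N. f n = f N"
  proof (rule ccontr)
    assume unstable: "\<nexists>N. \<forall>n\<ge>N. f n = f N"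
    have "\<exists>n. N \<le> n \<and> f n - f N \<noteq> {}" for N
    proof -
      obtain n where "N \<le> n" "f n \<noteq> f N" using unstable by blast
      then show ?thesis using mono[of N n] by blast
    qed
    then obtain next_index where next_index:
      "\<And>N. N \<le> next_index N" "\<And>N. f (next_index N) - f N \<noteq> {}"
      by metis
    define idx where "idx k = (next_index ^^ k) 0" for k
    have idx_Suc: "idx (Suc k) = next_index (idx k)" for k
      by (simp add: idx_def)
    have idx_mono: "m \<le> n \<Longrightarrow> idx m \<le> idx n" for m n
      using lift_Suc_mono_le[of idx m n] next_index(1) unfolding idx_Suc by blast
    have "\<forall>k. \<exists>a. a \<in> f (idx (Suc k)) - f (idx k)"
      using next_index(2) unfolding idx_Suc by blast
    then obtain g where g: "\<And>k. g k \<in> f (idx (Suc k)) - f (idx k)"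
      by metis
    have "g k \<in> carrier M" for k
      using g[of k] ideal[of "idx (Suc k)"] unfolding right_ideal_def by blast
    then obtain i j s where ij: "i < j" "s \<in> carrier M" "g j = g i \<otimes>\<^bsub>M\<^esub> s"
      using good[of g] by blast
    have "g i \<in> f (idx j)"
      using g[of i] mono[OF idx_mono[of "Suc i" j]] \<open>i < j\<close> by auto
    then have "g j \<in> f (idx j)"
      using ideal[of "idx j"] ij unfolding right_ideal_def by simp
    then show False using g[of j] by simp
  qed
qed

section \<open>Dickson's lemma\<close>

lemma Dickson_pointwise_le:
  fixes f :: "nat \<Rightarrow> 'i \<Rightarrow> nat"
  assumes "finite I"
  shows "\<exists>i j. i < j \<and> (\<forall>x\<in>I. f i x \<le> f j x)"
proof -
  define descents where "descents X = {x \<in> I. f (Max X) x < f (Min X) x}" for X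
  have descents_pair: "descents {i, j} = {x \<in> I. f j x < f i x}" if "i < j" for i j
    using that by (simp add: descents_def max_def min_def)
  obtain h where h: "bij_betw h (Pow I) {0..<card (Pow I)}"
    using ex_bij_betw_finite_nat[of "Pow I"] assms by blast
  have "h (descents X) < card (Pow I)" for X
    using bij_betwE[OF h] by (auto simp: descents_def)
  then obtain Y t where Y: "infinite Y" "\<forall>x\<in>Y. \<forall>y\<in>Y. x \<noteq> y \<longrightarrow> h (descents {x, y}) = t"
    using Ramsey2[of "UNIV :: nat set" "\<lambda>X. h (descents X)" "card (Pow I)"] by auto
  obtain i0 where "i0 \<in> Y" using Y(1) by (metis finite.emptyI ex_in_conv)
  obtain j0 where "j0 \<in> Y" "i0 < j0" using Y(1) unfolding infinite_nat_iff_unbounded by blast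
  define D where "D = descents {i0, j0}"
  have D: "{x \<in> I. f j x < f i x} = D" if "i \<in> Y" "j \<in> Y" "i < j" for i j
  proof -
    have "h (descents {i, j}) = h D"
      using Y(2) that \<open>i0 \<in> Y\<close> \<open>j0 \<in> Y\<close> \<open>i0 < j0\<close> by (simp add: D_def)
    moreover have "descents {i, j} \<in> Pow I" "D \<in> Pow I"
      by (auto simp: D_def descents_def)
    ultimately have "descents {i, j} = D"
      using bij_betw_imp_inj_on[OF h] by (simp add: inj_on_eq_iff)
    then show ?thesis using descents_pair[OF \<open>i < j\<close>] by simp
  qed
  show ?thesis
  proof (cases "D = {}")
    case True
    then have "\<forall>x\<in>I. f i0 x \<le> f j0 x"
      using D[OF \<open>i0 \<in> Y\<close> \<open>j0 \<in> Y\<close> \<open>i0 < j0\<close>] by (auto simp: not_less)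
    then show ?thesis using \<open>i0 < j0\<close> by blast
  next
    case False
    then obtain x where "x \<in> D" by blast
    then have descent: "f j x < f i x" if "i \<in> Y" "j \<in> Y" "i < j" for i j
      using D[OF that] by blast
    obtain y where y: "y \<in> Y" "\<And>z. z \<in> Y \<Longrightarrow> f y x \<le> f z x"
      using ex_has_least_nat[of "\<lambda>z. z \<in> Y" i0 "\<lambda>z. f z x"] \<open>i0 \<in> Y\<close> by blast
    obtain y' where "y' \<in> Y" "y < y'" using Y(1) unfolding infinite_nat_iff_unbounded by blast
    then show ?thesis using descent[of y y'] y by (meson leD)
  qed
qed

lemma Dickson_mset_pair:
  fixes g :: "nat \<Rightarrow> 'a multiset \<times> 'a multiset"
  assumes "finite A" "\<And>n. set_mset (fst (g n)) \<subseteq> A" "\<And>n. set_mset (snd (g n)) \<subseteq> A"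
  shows "\<exists>i j. i < j \<and> fst (g i) \<subseteq># fst (g j) \<and> snd (g i) \<subseteq># snd (g j)"
proof -
  define counts where "counts n = case_sum (count (fst (g n))) (count (snd (g n)))" for n
  obtain i j where "i < j" and le: "\<forall>x\<in>A <+> A. counts i x \<le> counts j x"
    using Dickson_pointwise_le[OF finite_Plus[OF assms(1) assms(1)], of counts] by blast
  have "count (fst (g i)) x \<le> count (fst (g j)) x \<and> count (snd (g i)) x \<le> count (snd (g j)) x"
    for x
  proof (cases "x \<in> A")
    case True
    then show ?thesis using le[rule_format, of "Inl x"] le[rule_format, of "Inr x"]
      by (simp add: counts_def Plus_def)
  next
    case False
    then have "count (fst (g i)) x = 0" "count (snd (g i)) x = 0"
      using assms(2,3)[of i] by (auto simp: count_eq_zero_iff)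
    then show ?thesis by simp
  qed
  then show ?thesis using \<open>i < j\<close> by (auto simp: subseteq_mset_def)
qed

lemma RelA_divisibility_almost_full:
  fixes g :: "nat \<Rightarrow> 'a multiset \<times> 'a multiset"
  assumes "cancellative H" "commutative H" "monoid H" "finite (atoms H)"
    and g: "\<And>k. g k \<in> carrier (RelA H)"
  shows "\<exists>i j s. i < j \<and> s \<in> carrier (RelA H) \<and> g j = g i \<otimes>\<^bsub>RelA H\<^esub> s"
proof -
  have g_atoms: "set_mset (fst (g n)) \<subseteq> atoms H" "set_mset (snd (g n)) \<subseteq> atoms H" for n
    using g[of n] by (auto simp: RelA_def carrier_rel_monoid ZA_def)
  then obtain i j where ij: "i < j" "fst (g i) \<subseteq># fst (g j)" "snd (g i) \<subseteq># snd (g j)"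
    using Dickson_mset_pair[OF assms(4), of g] by blast
  define s where "s = (fst (g j) - fst (g i), snd (g j) - snd (g i))"
  have s_carrier: "s \<in> carrier (ZA H \<times>\<times> ZA H)"
    using g_atoms[of j] by (auto simp: s_def ZA_def dest!: in_diffD)
  have g_ij: "g j = g i \<otimes>\<^bsub>ZA H \<times>\<times> ZA H\<^esub> s"
    using ij by (simp add: s_def mult_DirProd' ZA_def subset_mset.add_diff_inverse)
  have "saturated (carrier (RelA H)) (ZA H \<times>\<times> ZA H)"
    using RelA_properties[OF assms(3,1,2)] by simp
  moreover have "g i \<otimes>\<^bsub>ZA H \<times>\<times> ZA H\<^esub> s \<in> carrier (RelA H)"
    using g[of j] g_ij by simp
  ultimately have "s \<in> carrier (RelA H)"
    using s_carrier g[of i] unfolding saturated_def by blast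
  moreover have "g i \<otimes>\<^bsub>RelA H\<^esub> s = g j"
    using g_ij by (simp add: RelA_def)
  ultimately show ?thesis using ij(1) by (intro exI[of _ i] exI[of _ j] exI[of _ s]) simp
qed

lemma acc_right_ideals_RelA:
  assumes "monoid H" "reduced H" "cancellative H" "commutative H" "finitely_generated H"
  shows "acc_right_ideals (RelA H)"
  by (intro acc_right_ideals_if_divisibility_almost_full RelA_divisibility_almost_full[OF assms(3,4,1)]
      finite_atoms_if_finitely_generated[OF assms(1,2,5)])

theorem lemma3p3:
  fixes H :: "('a, 'b) monoid_scheme"
  assumes "monoid H" and "reduced H" and "atomic H" and "cancellative H"
  shows
    "(\<not> commutative H \<longrightarrow>
        saturated (carrier (RelF H)) (ZF H \<times>\<times> ZF H) \<and>
        reduced (RelF H) \<and> cancellative (RelF H) \<and> BF_monoid (RelF H) \<and>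
        (acc_right_ideals (RelF H) \<longrightarrow> finitely_generated (RelF H)))
   \<and> (commutative H \<longrightarrow>
        saturated (carrier (RelA H)) (ZA H \<times>\<times> ZA H) \<and>
        reduced (RelA H) \<and> cancellative (RelA H) \<and> BF_monoid (RelA H) \<and>
        (acc_right_ideals (RelA H) \<longrightarrow> finitely_generated (RelA H)) \<and>
        (finitely_generated H \<longrightarrow> acc_ideals (RelA H) \<and> finitely_generated (RelA H)))"
proof (intro conjI impI)
  note RelF = RelF_properties[OF assms(1,4)]
  then show "saturated (carrier (RelF H)) (ZF H \<times>\<times> ZF H)" "reduced (RelF H)"
    "cancellative (RelF H)" "BF_monoid (RelF H)"
    by simp_all
  show "acc_right_ideals (RelF H) \<Longrightarrow> finitely_generated (RelF H)"
    using RelF finitely_generated_if_acc_right_ideals unfolding BF_monoid_def by blast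
next
  assume "commutative H"
  note RelA = RelA_properties[OF assms(1,4) \<open>commutative H\<close>]
  then show "saturated (carrier (RelA H)) (ZA H \<times>\<times> ZA H)" "reduced (RelA H)"
    "cancellative (RelA H)" "BF_monoid (RelA H)"
    by simp_all
  show fg: "acc_right_ideals (RelA H) \<Longrightarrow> finitely_generated (RelA H)"
    using RelA finitely_generated_if_acc_right_ideals unfolding BF_monoid_def by blast
  assume "finitely_generated H"
  then have "acc_right_ideals (RelA H)"
    using acc_right_ideals_RelA assms(1,2,4) \<open>commutative H\<close> by blast
  then show "acc_ideals (RelA H)" "finitely_generated (RelA H)"
    using acc_ideals_if_acc_right_ideals fg by simp_all
qed

end
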